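(* Let $\mathcal C$ be a Markov category with conditionals, let $p\colon I\to X$ be a state, and let $E$ be an object. The assignment $(m,k)\mapsto (k\otimes\mathrm{id}_E)\circ\mathrm{copy}_E\circ m$ induces a bijection between (a) pairs $(m,[k])$ where $m\colon I\to E$ is a state and $[k]$ is an equivalence class of morphisms $k\colon E\to X$ modulo $m$-almost sure equality such that $k\circ m=p$ for each $k\in[k]$; and (b) dilations of $p$ with environment $E$.
   Context: A Markov category is a symmetric monoidal category $(\mathcal C,\otimes,I)$ with commutative comonoids $\mathrm{copy}_X\colon X\to X\otimes X$, $\mathrm{del}_X\colon X\to I$ compatible with $\otimes$, with $I$ terminal; a state is a morphism out of $I$. A dilation of $p\colon A\to X$ with environment $E$ is $\pi\colon A\to X\otimes E$ with $(\mathrm{id}_X\otimes\mathrm{del}_E)\circ\pi=p$. For $m\colon\Theta\to E$ and $k,k'\colon E\to X$, $k$ and $k'$ are $m$-almost surely equal if $(\mathrm{id}_E\otimes k)\circ\mathrm{copy}_E\circ m=(\mathrm{id}_E\otimes k')\circ\mathrm{copy}_E\circ m$. For $f\colon A\to X\otimes Y$ with $f_X=(\mathrm{id}_X\otimes\mathrm{del}_Y)\circ f$, a conditional of $f$ given $X$ is $f_{|X}\colon X\otimes A\to Y$ with $f=(\mathrm{id}_X\otimes f_{|X})\circ(\mathrm{copy}_X\otimes\mathrm{id}_A)\circ(f_X\otimes\mathrm{id}_A)\circ\mathrm{copy}_A$; $\mathcal C$ has conditionals if every such $f$ (for all objects, in either order of the factors via the symmetry) has one. *)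

theory Defs
  imports Main
begin

text \<open>A (small) category with a (non-strict) symmetric monoidal structure and
  copy/delete maps.  Every element of type 'm is a morphism; 'mcmp C g f' is g after f.\<close>

record ('o,'m) mcat =
  Dom :: "'m \<Rightarrow> 'o"
  Cod :: "'m \<Rightarrow> 'o"
  mcmp :: "'m \<Rightarrow> 'm \<Rightarrow> 'm"
  idm :: "'o \<Rightarrow> 'm"
  tno :: "'o \<Rightarrow> 'o \<Rightarrow> 'o"
  tnm :: "'m \<Rightarrow> 'm \<Rightarrow> 'm"
  unit :: "'o"
  asc :: "'o \<Rightarrow> 'o \<Rightarrow> 'o \<Rightarrow> 'm"
  lu :: "'o \<Rightarrow> 'm"
  ru :: "'o \<Rightarrow> 'm"
  sym :: "'o \<Rightarrow> 'o \<Rightarrow> 'm"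
  cpy :: "'o \<Rightarrow> 'm"
  del :: "'o \<Rightarrow> 'm"

definition hom :: "('o,'m) mcat \<Rightarrow> 'o \<Rightarrow> 'o \<Rightarrow> 'm set" where
  "hom C a b = {f. Dom C f = a \<and> Cod C f = b}"

definition is_inverse :: "('o,'m) mcat \<Rightarrow> 'm \<Rightarrow> 'm \<Rightarrow> bool" where
  "is_inverse C f g \<longleftrightarrow> Dom C g = Cod C f \<and> Cod C g = Dom C f \<and>
     mcmp C g f = idm C (Dom C f) \<and> mcmp C f g = idm C (Cod C f)"

definition iso_in :: "('o,'m) mcat \<Rightarrow> 'm \<Rightarrow> bool" where
  "iso_in C f \<longleftrightarrow> (\<exists>g. is_inverse C f g)"

definition inv_in :: "('o,'m) mcat \<Rightarrow> 'm \<Rightarrow> 'm" where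
  "inv_in C f = (SOME g. is_inverse C f g)"

locale markov_category =
  fixes C :: "('o,'m) mcat"
  assumes
    dom_id: "Dom C (idm C a) = a" and
    cod_id: "Cod C (idm C a) = a" and
    dom_cmp: "Dom C g = Cod C f \<Longrightarrow> Dom C (mcmp C g f) = Dom C f" and
    cod_cmp: "Dom C g = Cod C f \<Longrightarrow> Cod C (mcmp C g f) = Cod C g" and
    cmp_id_right: "mcmp C f (idm C (Dom C f)) = f" and
    cmp_id_left: "mcmp C (idm C (Cod C f)) f = f" and
    cmp_assoc: "\<lbrakk>Dom C h = Cod C g; Dom C g = Cod C f\<rbrakk> \<Longrightarrow>
        mcmp C h (mcmp C g f) = mcmp C (mcmp C h g) f" and
    dom_tnm: "Dom C (tnm C f g) = tno C (Dom C f) (Dom C g)" and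
    cod_tnm: "Cod C (tnm C f g) = tno C (Cod C f) (Cod C g)" and
    tnm_id: "tnm C (idm C a) (idm C b) = idm C (tno C a b)" and
    tnm_cmp: "\<lbrakk>Dom C g = Cod C f; Dom C g' = Cod C f'\<rbrakk> \<Longrightarrow>
        tnm C (mcmp C g f) (mcmp C g' f') = mcmp C (tnm C g g') (tnm C f f')" and
    asc_hom: "asc C a b c \<in> hom C (tno C (tno C a b) c) (tno C a (tno C b c))" and
    asc_iso: "iso_in C (asc C a b c)" and
    asc_nat: "mcmp C (asc C (Cod C f) (Cod C g) (Cod C h)) (tnm C (tnm C f g) h)
        = mcmp C (tnm C f (tnm C g h)) (asc C (Dom C f) (Dom C g) (Dom C h))" and
    lu_hom: "lu C a \<in> hom C (tno C (unit C) a) a" and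
    lu_iso: "iso_in C (lu C a)" and
    lu_nat: "mcmp C f (lu C (Dom C f)) = mcmp C (lu C (Cod C f)) (tnm C (idm C (unit C)) f)" and
    ru_hom: "ru C a \<in> hom C (tno C a (unit C)) a" and
    ru_iso: "iso_in C (ru C a)" and
    ru_nat: "mcmp C f (ru C (Dom C f)) = mcmp C (ru C (Cod C f)) (tnm C f (idm C (unit C)))" and
    sym_hom: "sym C a b \<in> hom C (tno C a b) (tno C b a)" and
    sym_invol: "mcmp C (sym C b a) (sym C a b) = idm C (tno C a b)" and
    sym_nat: "mcmp C (sym C (Cod C f) (Cod C g)) (tnm C f g)
        = mcmp C (tnm C g f) (sym C (Dom C f) (Dom C g))" and
    pentagon: "mcmp C (asc C a b (tno C c d)) (asc C (tno C a b) c d)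
        = mcmp C (tnm C (idm C a) (asc C b c d))
            (mcmp C (asc C a (tno C b c) d) (tnm C (asc C a b c) (idm C d)))" and
    triangle: "mcmp C (tnm C (idm C a) (lu C b)) (asc C a (unit C) b)
        = tnm C (ru C a) (idm C b)" and
    hexagon: "mcmp C (asc C b c a) (mcmp C (sym C a (tno C b c)) (asc C a b c))
        = mcmp C (tnm C (idm C b) (sym C a c))
            (mcmp C (asc C b a c) (tnm C (sym C a b) (idm C c)))" and
    cpy_hom: "cpy C a \<in> hom C a (tno C a a)" and
    del_hom: "del C a \<in> hom C a (unit C)" and
    counit_left: "mcmp C (lu C a) (mcmp C (tnm C (del C a) (idm C a)) (cpy C a)) = idm C a" and
    counit_right: "mcmp C (ru C a) (mcmp C (tnm C (idm C a) (del C a)) (cpy C a)) = idm C a" and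
    coassoc: "mcmp C (asc C a a a) (mcmp C (tnm C (cpy C a) (idm C a)) (cpy C a))
        = mcmp C (tnm C (idm C a) (cpy C a)) (cpy C a)" and
    cocomm: "mcmp C (sym C a a) (cpy C a) = cpy C a" and
    cpy_tensor: "cpy C (tno C a b) =
        mcmp C (inv_in C (asc C a b (tno C a b)))
         (mcmp C (tnm C (idm C a) (asc C b a b))
          (mcmp C (tnm C (idm C a) (tnm C (sym C a b) (idm C b)))
           (mcmp C (tnm C (idm C a) (inv_in C (asc C a b b)))
            (mcmp C (asc C a a (tno C b b)) (tnm C (cpy C a) (cpy C b))))))" and
    del_tensor: "del C (tno C a b) = mcmp C (lu C (unit C)) (tnm C (del C a) (del C b))" and
    unit_terminal: "f \<in> hom C a (unit C) \<Longrightarrow> f = del C a"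

definition marg1 :: "('o,'m) mcat \<Rightarrow> 'o \<Rightarrow> 'o \<Rightarrow> 'm \<Rightarrow> 'm" where
  "marg1 C X Y f = mcmp C (ru C X) (mcmp C (tnm C (idm C X) (del C Y)) f)"

definition is_conditional :: "('o,'m) mcat \<Rightarrow> 'o \<Rightarrow> 'o \<Rightarrow> 'o \<Rightarrow> 'm \<Rightarrow> 'm \<Rightarrow> bool" where
  "is_conditional C A X Y f c \<longleftrightarrow> c \<in> hom C (tno C X A) Y \<and>
     f = mcmp C (tnm C (idm C X) c)
          (mcmp C (asc C X X A)
           (mcmp C (tnm C (cpy C X) (idm C A))
            (mcmp C (tnm C (marg1 C X Y f) (idm C A)) (cpy C A))))"

definition has_conditionals :: "('o,'m) mcat \<Rightarrow> bool" where
  "has_conditionals C \<longleftrightarrow>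
     (\<forall>A X Y f. f \<in> hom C A (tno C X Y) \<longrightarrow> (\<exists>c. is_conditional C A X Y f c))"

definition as_eq :: "('o,'m) mcat \<Rightarrow> 'o \<Rightarrow> 'm \<Rightarrow> 'm \<Rightarrow> 'm \<Rightarrow> bool" where
  "as_eq C E m k k' \<longleftrightarrow>
     mcmp C (tnm C (idm C E) k) (mcmp C (cpy C E) m) = mcmp C (tnm C (idm C E) k') (mcmp C (cpy C E) m)"

definition as_rel :: "('o,'m) mcat \<Rightarrow> 'o \<Rightarrow> 'o \<Rightarrow> 'm \<Rightarrow> ('m \<times> 'm) set" where
  "as_rel C E X m = {(k, k'). k \<in> hom C E X \<and> k' \<in> hom C E X \<and> as_eq C E m k k'}"

definition state_class_pairs :: "('o,'m) mcat \<Rightarrow> 'o \<Rightarrow> 'm \<Rightarrow> 'o \<Rightarrow> ('m \<times> 'm set) set" where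
  "state_class_pairs C X p E = {(m, K). m \<in> hom C (unit C) E \<and> K \<in> hom C E X // as_rel C E X m
       \<and> (\<forall>k\<in>K. mcmp C k m = p)}"

definition is_dilation :: "('o,'m) mcat \<Rightarrow> 'o \<Rightarrow> 'o \<Rightarrow> 'm \<Rightarrow> 'o \<Rightarrow> 'm \<Rightarrow> bool" where
  "is_dilation C A X p E \<pi> \<longleftrightarrow> \<pi> \<in> hom C A (tno C X E) \<and>
     mcmp C (ru C X) (mcmp C (tnm C (idm C X) (del C E)) \<pi>) = p"

definition dilations :: "('o,'m) mcat \<Rightarrow> 'o \<Rightarrow> 'o \<Rightarrow> 'm \<Rightarrow> 'o \<Rightarrow> 'm set" where
  "dilations C A X p E = {\<pi>. is_dilation C A X p E \<pi>}"

end

theory Submission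
  imports Defs
begin

text \<open>A conditional of (the swap of) \<pi>
  given E, precomposed with the inverse right unitor, is a morphism k : E \<rightarrow> X with
  \<pi> = (k \<otimes> id) \<circ> copy \<circ> m, where m is the E-marginal of \<pi>; so every dilation arises
  from some pair (m, k), and then k \<circ> m = p. Conversely, since I is terminal, deleting X
  from (k \<otimes> id) \<circ> copy \<circ> m gives back m, and by cocommutativity of copy two such
  states with the same m agree exactly when k and k' are m-almost surely equal.
  Hence the assignment descends to a bijection on almost-sure classes.\<close>

lemma bij_betw_factor_through:
  assumes "q ` A = Q" and "f ` A = B"
    and "\<And>a b. a \<in> A \<Longrightarrow> b \<in> A \<Longrightarrow> f a = f b \<longleftrightarrow> q a = q b"
  shows "\<exists>F. (\<forall>a\<in>A. F (q a) = f a) \<and> bij_betw F Q B"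
proof -
  define F where "F c = f (SOME a. a \<in> A \<and> q a = c)" for c
  have F_q: "F (q a) = f a" if "a \<in> A" for a
  proof -
    have "\<exists>b. b \<in> A \<and> q b = q a" using that by blast
    then have "(SOME b. b \<in> A \<and> q b = q a) \<in> A \<and> q (SOME b. b \<in> A \<and> q b = q a) = q a"
      by (rule someI_ex)
    then show ?thesis using assms(3) that unfolding F_def by blast
  qed
  have "inj_on F Q"
  proof (rule inj_onI)
    fix c d assume "c \<in> Q" "d \<in> Q" "F c = F d"
    then obtain a b where "a \<in> A" "b \<in> A" "c = q a" "d = q b" "f a = f b"
      using assms(1) F_q by auto
    then show "c = d" using assms(3) by blast
  qed
  moreover have "F ` Q = B"
    using assms(1,2) F_q by (auto simp: image_image cong: image_cong)
  ultimately show ?thesis using F_q unfolding bij_betw_def by blast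
qed

lemma equiv_as_rel: "equiv (hom C E X) (as_rel C E X m)"
  unfolding equiv_def refl_on_def Relation.sym_def trans_def as_rel_def as_eq_def by auto

lemma as_rel_class_eq_iff:
  assumes "k \<in> hom C E X" and "k' \<in> hom C E X"
  shows "as_rel C E X m `` {k} = as_rel C E X m `` {k'} \<longleftrightarrow> as_eq C E m k k'"
  using eq_equiv_class_iff[OF equiv_as_rel assms] assms unfolding as_rel_def by blast

context markov_category
begin

abbreviation cmp (infixr "\<cdot>" 55) where "g \<cdot> f \<equiv> mcmp C g f"
abbreviation tns (infixr "\<otimes>" 60) where "f \<otimes> g \<equiv> tnm C f g"

lemma Dom_Cod_structure [simp]:
  "Dom C (asc C a b c) = tno C (tno C a b) c" "Cod C (asc C a b c) = tno C a (tno C b c)"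
  "Dom C (lu C a) = tno C (unit C) a" "Cod C (lu C a) = a"
  "Dom C (ru C a) = tno C a (unit C)" "Cod C (ru C a) = a"
  "Dom C (sym C a b) = tno C a b" "Cod C (sym C a b) = tno C b a"
  "Dom C (cpy C a) = a" "Cod C (cpy C a) = tno C a a"
  "Dom C (del C a) = a" "Cod C (del C a) = unit C"
  using asc_hom lu_hom ru_hom sym_hom cpy_hom del_hom unfolding hom_def by auto

declare dom_id [simp] cod_id [simp] dom_tnm [simp] cod_tnm [simp] dom_cmp [simp] cod_cmp [simp]
  tnm_id [simp]

lemma cmp_id_right' [simp]: "Dom C f = a \<Longrightarrow> f \<cdot> idm C a = f"
  using cmp_id_right by auto

lemma cmp_id_left' [simp]: "Cod C f = a \<Longrightarrow> idm C a \<cdot> f = f"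
  using cmp_id_left by auto

lemma cmp_assoc' [simp]:
  "Dom C h = Cod C g \<Longrightarrow> Dom C g = Cod C f \<Longrightarrow> (h \<cdot> g) \<cdot> f = h \<cdot> (g \<cdot> f)"
  using cmp_assoc by auto

lemma tnm_cmp' [simp]:
  "Dom C g = Cod C f \<Longrightarrow> Dom C g' = Cod C f' \<Longrightarrow> (g \<otimes> g') \<cdot> (f \<otimes> f') = (g \<cdot> f) \<otimes> (g' \<cdot> f')"
  using tnm_cmp by auto

lemma tnm_cmp_cmp [simp]:
  "Dom C g = Cod C f \<Longrightarrow> Dom C g' = Cod C f' \<Longrightarrow> Cod C x = tno C (Dom C f) (Dom C f') \<Longrightarrow>
   (g \<otimes> g') \<cdot> ((f \<otimes> f') \<cdot> x) = ((g \<cdot> f) \<otimes> (g' \<cdot> f')) \<cdot> x"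
  by (metis cmp_assoc' cod_tnm dom_tnm tnm_cmp')

lemma is_inverse_inv_in: "iso_in C f \<Longrightarrow> is_inverse C f (inv_in C f)"
  unfolding iso_in_def inv_in_def by (metis someI_ex)

lemma iso_sym: "iso_in C (sym C a b)"
  unfolding iso_in_def is_inverse_def by (auto intro!: exI[of _ "sym C b a"] simp: sym_invol)

lemma sym_sym_cancel [simp]: "Cod C x = tno C a b \<Longrightarrow> sym C b a \<cdot> (sym C a b \<cdot> x) = x"
  by (metis Dom_Cod_structure(7,8) cmp_assoc' cmp_id_left' sym_invol)

lemmas iso_structure [simp] = asc_iso lu_iso ru_iso iso_sym

lemma Dom_inv_in [simp]: "iso_in C f \<Longrightarrow> Dom C (inv_in C f) = Cod C f"
  and Cod_inv_in [simp]: "iso_in C f \<Longrightarrow> Cod C (inv_in C f) = Dom C f"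
  and inv_in_cmp [simp]: "iso_in C f \<Longrightarrow> inv_in C f \<cdot> f = idm C (Dom C f)"
  and cmp_inv_in [simp]: "iso_in C f \<Longrightarrow> f \<cdot> inv_in C f = idm C (Cod C f)"
  using is_inverse_inv_in unfolding is_inverse_def by auto

lemma inv_in_cmp_cancel [simp]: "iso_in C f \<Longrightarrow> Cod C x = Dom C f \<Longrightarrow> inv_in C f \<cdot> (f \<cdot> x) = x"
  by (metis cmp_assoc' Cod_inv_in Dom_inv_in inv_in_cmp cmp_id_left')

lemma cmp_inv_in_cancel [simp]: "iso_in C f \<Longrightarrow> Cod C x = Cod C f \<Longrightarrow> f \<cdot> (inv_in C f \<cdot> x) = x"
  by (metis cmp_assoc' Cod_inv_in Dom_inv_in cmp_inv_in cmp_id_left')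

lemma iso_cancel_left:
  "iso_in C f \<Longrightarrow> Cod C x = Dom C f \<Longrightarrow> Cod C y = Dom C f \<Longrightarrow> f \<cdot> x = f \<cdot> y \<Longrightarrow> x = y"
  by (metis inv_in_cmp_cancel)

lemma ru_natural: "f \<in> hom C a b \<Longrightarrow> ru C b \<cdot> (f \<otimes> idm C (unit C)) = f \<cdot> ru C a"
  using ru_nat[of f] unfolding hom_def by simp

lemma lu_natural: "f \<in> hom C a b \<Longrightarrow> lu C b \<cdot> (idm C (unit C) \<otimes> f) = f \<cdot> lu C a"
  using lu_nat[of f] unfolding hom_def by simp

lemma tnm_unit_right_cancel:
  assumes "f \<in> hom C a b" and "g \<in> hom C a b" and "f \<otimes> idm C (unit C) = g \<otimes> idm C (unit C)"
  shows "f = g"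
proof -
  have "f \<cdot> ru C a = g \<cdot> ru C a"
    using ru_natural[OF assms(1)] ru_natural[OF assms(2)] assms(3) by simp
  then have "(f \<cdot> ru C a) \<cdot> inv_in C (ru C a) = (g \<cdot> ru C a) \<cdot> inv_in C (ru C a)" by simp
  then show "f = g" using assms unfolding hom_def by simp
qed

lemma ru_tno_tnm_id:
  "ru C (tno C x y) \<otimes> idm C z = ((idm C x \<otimes> ru C y) \<cdot> asc C x y (unit C)) \<otimes> idm C z"
proof -
  let ?I = "unit C"
  have "asc C x y z \<cdot> (ru C (tno C x y) \<otimes> idm C z)
      = asc C x y z \<cdot> ((idm C (tno C x y) \<otimes> lu C z) \<cdot> asc C (tno C x y) ?I z)"
    using triangle[of "tno C x y" z] by simp
  also have "\<dots> = (asc C x y z \<cdot> ((idm C x \<otimes> idm C y) \<otimes> lu C z)) \<cdot> asc C (tno C x y) ?I z"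
    by simp
  also have "\<dots> = (idm C x \<otimes> (idm C y \<otimes> lu C z)) \<cdot>
      (asc C x y (tno C ?I z) \<cdot> asc C (tno C x y) ?I z)"
    using asc_nat[of "idm C x" "idm C y" "lu C z"] by simp
  also have "\<dots> = (idm C x \<otimes> (idm C y \<otimes> lu C z)) \<cdot>
      ((idm C x \<otimes> asc C y ?I z) \<cdot> (asc C x (tno C y ?I) z \<cdot> (asc C x y ?I \<otimes> idm C z)))"
    using pentagon[of x y ?I z] by simp
  also have "\<dots> = (idm C x \<otimes> (ru C y \<otimes> idm C z)) \<cdot>
      (asc C x (tno C y ?I) z \<cdot> (asc C x y ?I \<otimes> idm C z))"
    using triangle[of y z] by simp
  also have "\<dots> = (asc C x y z \<cdot> ((idm C x \<otimes> ru C y) \<otimes> idm C z)) \<cdot> (asc C x y ?I \<otimes> idm C z)"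
    using asc_nat[of "idm C x" "ru C y" "idm C z"] by simp
  also have "\<dots> = asc C x y z \<cdot> (((idm C x \<otimes> ru C y) \<cdot> asc C x y ?I) \<otimes> idm C z)"
    by simp
  finally show ?thesis
    by (rule iso_cancel_left[rotated 3]) simp_all
qed

lemma ru_tno: "ru C (tno C x y) = (idm C x \<otimes> ru C y) \<cdot> asc C x y (unit C)"
  by (rule tnm_unit_right_cancel[OF _ _ ru_tno_tnm_id]) (simp_all add: hom_def)

lemma asc_cmp_inv_ru:
  "asc C a b (unit C) \<cdot> inv_in C (ru C (tno C a b)) = idm C a \<otimes> inv_in C (ru C b)"
proof -
  have "asc C a b (unit C) = (idm C a \<otimes> inv_in C (ru C b)) \<cdot> ru C (tno C a b)"
    unfolding ru_tno by simp
  then show ?thesis by simp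
qed

lemma inv_ru_natural:
  assumes "f \<in> hom C a b"
  shows "(f \<otimes> idm C (unit C)) \<cdot> inv_in C (ru C a) = inv_in C (ru C b) \<cdot> f"
proof (rule iso_cancel_left[of "ru C b"])
  have "ru C b \<cdot> ((f \<otimes> idm C (unit C)) \<cdot> inv_in C (ru C a)) = (f \<cdot> ru C a) \<cdot> inv_in C (ru C a)"
    using assms ru_nat[of f] unfolding hom_def by simp
  then show "ru C b \<cdot> ((f \<otimes> idm C (unit C)) \<cdot> inv_in C (ru C a)) = ru C b \<cdot> (inv_in C (ru C b) \<cdot> f)"
    using assms unfolding hom_def by simp
qed (use assms in \<open>simp_all add: hom_def\<close>)

lemma del_cmp: "f \<in> hom C a b \<Longrightarrow> del C b \<cdot> f = del C a"
  by (rule unit_terminal) (simp add: hom_def)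

lemma cpy_unit: "cpy C (unit C) = inv_in C (ru C (unit C))"
proof -
  have "del C (unit C) = idm C (unit C)"
    by (rule unit_terminal[symmetric]) (simp add: hom_def)
  then have "ru C (unit C) \<cdot> cpy C (unit C) = idm C (unit C)"
    using counit_right[of "unit C"] by simp
  then have "inv_in C (ru C (unit C)) \<cdot> (ru C (unit C) \<cdot> cpy C (unit C)) = inv_in C (ru C (unit C))"
    by simp
  then show ?thesis by simp
qed

definition joint_state :: "'o \<Rightarrow> 'm \<Rightarrow> 'm \<Rightarrow> 'm" where
  "joint_state E k m = (k \<otimes> idm C E) \<cdot> (cpy C E \<cdot> m)"

definition factorizations :: "'o \<Rightarrow> 'o \<Rightarrow> 'm \<Rightarrow> ('m \<times> 'm) set" where
  "factorizations E X p = {(m, k). m \<in> hom C (unit C) E \<and> k \<in> hom C E X \<and> k \<cdot> m = p}"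

lemma joint_state_swap:
  assumes "k \<in> hom C E X" and "m \<in> hom C A E"
  shows "joint_state E k m = sym C E X \<cdot> ((idm C E \<otimes> k) \<cdot> (cpy C E \<cdot> m))"
proof -
  have "sym C E X \<cdot> ((idm C E \<otimes> k) \<cdot> (cpy C E \<cdot> m)) = ((sym C E X \<cdot> (idm C E \<otimes> k)) \<cdot> cpy C E) \<cdot> m"
    using assms unfolding hom_def by simp
  also have "\<dots> = (k \<otimes> idm C E) \<cdot> ((sym C E E \<cdot> cpy C E) \<cdot> m)"
    using assms sym_nat[of "idm C E" k] unfolding hom_def by simp
  finally show ?thesis unfolding joint_state_def cocomm by simp
qed

lemma marg1_joint_state:
  assumes "k \<in> hom C E X" and "m \<in> hom C A E"
  shows "marg1 C X E (joint_state E k m) = k \<cdot> m"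
proof -
  have "marg1 C X E (joint_state E k m)
      = ru C X \<cdot> ((k \<otimes> idm C (unit C)) \<cdot> ((idm C E \<otimes> del C E) \<cdot> (cpy C E \<cdot> m)))"
    using assms unfolding marg1_def joint_state_def hom_def by simp
  also have "\<dots> = (ru C X \<cdot> (k \<otimes> idm C (unit C))) \<cdot> ((idm C E \<otimes> del C E) \<cdot> (cpy C E \<cdot> m))"
    using assms unfolding hom_def by simp
  also have "\<dots> = k \<cdot> ((ru C E \<cdot> ((idm C E \<otimes> del C E) \<cdot> cpy C E)) \<cdot> m)"
    using assms ru_natural[OF assms(1)] unfolding hom_def by simp
  finally show ?thesis using assms counit_right[of E] unfolding hom_def by simp
qed

lemma env_marginal_joint_state:
  assumes "k \<in> hom C E X" and "m \<in> hom C A E"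
  shows "lu C E \<cdot> ((del C X \<otimes> idm C E) \<cdot> joint_state E k m) = m"
proof -
  have "lu C E \<cdot> ((del C X \<otimes> idm C E) \<cdot> joint_state E k m)
      = (lu C E \<cdot> ((del C E \<otimes> idm C E) \<cdot> cpy C E)) \<cdot> m"
    using assms del_cmp[of k] unfolding joint_state_def hom_def by simp
  then show ?thesis using assms counit_left[of E] unfolding hom_def by simp
qed

lemma as_eq_imp_cmp_eq:
  assumes "k \<in> hom C E X" and "k' \<in> hom C E X" and "m \<in> hom C A E" and "as_eq C E m k k'"
  shows "k \<cdot> m = k' \<cdot> m"
proof -
  have "lu C X \<cdot> ((del C E \<otimes> idm C X) \<cdot> ((idm C E \<otimes> h) \<cdot> (cpy C E \<cdot> m))) = h \<cdot> m"
    if "h \<in> hom C E X" for h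
  proof -
    have "lu C X \<cdot> ((del C E \<otimes> idm C X) \<cdot> ((idm C E \<otimes> h) \<cdot> (cpy C E \<cdot> m)))
        = lu C X \<cdot> ((idm C (unit C) \<otimes> h) \<cdot> ((del C E \<otimes> idm C E) \<cdot> (cpy C E \<cdot> m)))"
      using that assms(3) unfolding hom_def by simp
    also have "\<dots> = (lu C X \<cdot> (idm C (unit C) \<otimes> h)) \<cdot> ((del C E \<otimes> idm C E) \<cdot> (cpy C E \<cdot> m))"
      using that assms(3) unfolding hom_def by simp
    also have "\<dots> = h \<cdot> ((lu C E \<cdot> ((del C E \<otimes> idm C E) \<cdot> cpy C E)) \<cdot> m)"
      using that assms(3) lu_natural[OF that] unfolding hom_def by simp
    finally show ?thesis using assms(3) counit_left[of E] unfolding hom_def by simp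
  qed
  then show ?thesis using assms unfolding as_eq_def by metis
qed

lemma joint_state_eq_iff:
  assumes "k \<in> hom C E X" and "k' \<in> hom C E X" and "m \<in> hom C A E" and "m' \<in> hom C A E"
  shows "joint_state E k m = joint_state E k' m' \<longleftrightarrow> m = m' \<and> as_eq C E m k k'"
proof
  assume eq: "joint_state E k m = joint_state E k' m'"
  then have "m = m'"
    using env_marginal_joint_state[OF assms(1,3)] env_marginal_joint_state[OF assms(2,4)] by simp
  moreover have "as_eq C E m k k'"
    unfolding as_eq_def
    by (rule iso_cancel_left[where f = "sym C E X"])
      (use assms eq joint_state_swap \<open>m = m'\<close> in \<open>auto simp: hom_def\<close>)
  ultimately show "m = m' \<and> as_eq C E m k k'" ..
next
  assume "m = m' \<and> as_eq C E m k k'"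
  then show "joint_state E k m = joint_state E k' m'"
    using assms joint_state_swap unfolding as_eq_def by metis
qed

lemma joint_state_hom: "k \<in> hom C E X \<Longrightarrow> m \<in> hom C A E \<Longrightarrow> joint_state E k m \<in> hom C A (tno C X E)"
  unfolding joint_state_def hom_def by simp

lemma state_eq_cpy_conditional:
  assumes "\<sigma> \<in> hom C (unit C) (tno C E X)" and "is_conditional C (unit C) E X \<sigma> c"
  shows "\<sigma> = (idm C E \<otimes> (c \<cdot> inv_in C (ru C E))) \<cdot> (cpy C E \<cdot> marg1 C E X \<sigma>)"
proof -
  let ?I = "unit C"
  define m where "m = marg1 C E X \<sigma>"
  have m: "m \<in> hom C ?I E" using assms(1) unfolding m_def marg1_def hom_def by simp
  have c: "c \<in> hom C (tno C E ?I) X" using assms(2) unfolding is_conditional_def by simp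
  have "\<sigma> = (idm C E \<otimes> c) \<cdot> (asc C E E ?I \<cdot> ((cpy C E \<otimes> idm C ?I) \<cdot> ((m \<otimes> idm C ?I) \<cdot> cpy C ?I)))"
    using assms(2) unfolding is_conditional_def m_def by simp
  also have "\<dots> = (idm C E \<otimes> c) \<cdot> (asc C E E ?I \<cdot> (((cpy C E \<cdot> m) \<otimes> idm C ?I) \<cdot> inv_in C (ru C ?I)))"
    using m unfolding cpy_unit hom_def by simp
  also have "\<dots> = (idm C E \<otimes> c) \<cdot> ((asc C E E ?I \<cdot> inv_in C (ru C (tno C E E))) \<cdot> (cpy C E \<cdot> m))"
    using m inv_ru_natural[of "cpy C E \<cdot> m" ?I "tno C E E"] unfolding hom_def by simp
  also have "\<dots> = (idm C E \<otimes> (c \<cdot> inv_in C (ru C E))) \<cdot> (cpy C E \<cdot> m)"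
    using m c unfolding asc_cmp_inv_ru hom_def by simp
  finally show ?thesis unfolding m_def .
qed

lemma joint_state_of_bipartite_state:
  assumes "has_conditionals C" and "\<pi> \<in> hom C (unit C) (tno C X E)"
  obtains m k where "m \<in> hom C (unit C) E" and "k \<in> hom C E X" and "\<pi> = joint_state E k m"
proof -
  define \<sigma> where "\<sigma> = sym C X E \<cdot> \<pi>"
  have \<sigma>: "\<sigma> \<in> hom C (unit C) (tno C E X)" using assms(2) unfolding \<sigma>_def hom_def by simp
  then obtain c where c: "is_conditional C (unit C) E X \<sigma> c"
    using assms(1) unfolding has_conditionals_def by blast
  define m where "m = marg1 C E X \<sigma>"
  define k where "k = c \<cdot> inv_in C (ru C E)"
  have m: "m \<in> hom C (unit C) E" using \<sigma> unfolding m_def marg1_def hom_def by simp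
  have k: "k \<in> hom C E X" using c unfolding is_conditional_def k_def hom_def by simp
  have "\<pi> = sym C E X \<cdot> \<sigma>"
    using assms(2) unfolding \<sigma>_def hom_def by simp
  also have "\<dots> = joint_state E k m"
    using state_eq_cpy_conditional[OF \<sigma> c] joint_state_swap[OF k m] unfolding m_def k_def by simp
  finally show ?thesis using that m k by blast
qed

lemma dilations_eq_image_factorizations:
  assumes "has_conditionals C"
  shows "dilations C (unit C) X p E = (\<lambda>(m, k). joint_state E k m) ` factorizations E X p"
proof
  show "dilations C (unit C) X p E \<subseteq> (\<lambda>(m, k). joint_state E k m) ` factorizations E X p"
  proof
    fix \<pi> assume "\<pi> \<in> dilations C (unit C) X p E"
    then have \<pi>: "\<pi> \<in> hom C (unit C) (tno C X E)" and p: "marg1 C X E \<pi> = p"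
      unfolding dilations_def is_dilation_def marg1_def by auto
    obtain m k where "m \<in> hom C (unit C) E" "k \<in> hom C E X" "\<pi> = joint_state E k m"
      using joint_state_of_bipartite_state[OF assms \<pi>] .
    with p show "\<pi> \<in> (\<lambda>(m, k). joint_state E k m) ` factorizations E X p"
      unfolding factorizations_def by (auto simp: marg1_joint_state intro!: image_eqI[of _ _ "(m, k)"])
  qed
next
  show "(\<lambda>(m, k). joint_state E k m) ` factorizations E X p \<subseteq> dilations C (unit C) X p E"
    by (auto simp: factorizations_def dilations_def is_dilation_def joint_state_hom
        marg1_joint_state[unfolded marg1_def])
qed

lemma state_class_pairsD:
  assumes "(m, K) \<in> state_class_pairs C X p E" and "k \<in> K"
  shows "(m, k) \<in> factorizations E X p" and "K = as_rel C E X m `` {k}"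
proof -
  from assms(1) have K: "K \<in> hom C E X // as_rel C E X m"
    unfolding state_class_pairs_def by simp
  then obtain h where "K = as_rel C E X m `` {h}" by (rule quotientE)
  with assms(2) have "(h, k) \<in> as_rel C E X m" by simp
  then have "K = as_rel C E X m `` {k}" and "k \<in> hom C E X"
    using equiv_class_eq_iff[OF equiv_as_rel[of C E X m]] \<open>K = _\<close> by blast+
  then show "K = as_rel C E X m `` {k}" by simp
  from \<open>k \<in> hom C E X\<close> assms show "(m, k) \<in> factorizations E X p"
    unfolding state_class_pairs_def factorizations_def by auto
qed

lemma state_class_pairs_eq_image_factorizations:
  "state_class_pairs C X p E = (\<lambda>(m, k). (m, as_rel C E X m `` {k})) ` factorizations E X p"
proof
  show "state_class_pairs C X p E \<subseteq> (\<lambda>(m, k). (m, as_rel C E X m `` {k})) ` factorizations E X p"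
  proof clarify
    fix m K assume mK: "(m, K) \<in> state_class_pairs C X p E"
    then have "K \<noteq> {}"
      using in_quotient_imp_non_empty[OF equiv_as_rel[of C E X m]]
      unfolding state_class_pairs_def by blast
    then obtain k where k: "k \<in> K" by blast
    have "(m, K) = (\<lambda>(m, k). (m, as_rel C E X m `` {k})) (m, k)"
      using state_class_pairsD(2)[OF mK k] by simp
    then show "(m, K) \<in> (\<lambda>(m, k). (m, as_rel C E X m `` {k})) ` factorizations E X p"
      using state_class_pairsD(1)[OF mK k] by (rule image_eqI)
  qed
next
  show "(\<lambda>(m, k). (m, as_rel C E X m `` {k})) ` factorizations E X p \<subseteq> state_class_pairs C X p E"
  proof clarify
    fix m k assume "(m, k) \<in> factorizations E X p"
    then have m: "m \<in> hom C (unit C) E" and k: "k \<in> hom C E X" and p: "k \<cdot> m = p"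
      unfolding factorizations_def by auto
    have "k' \<cdot> m = p" if "k' \<in> as_rel C E X m `` {k}" for k'
      using that as_eq_imp_cmp_eq[OF k _ m] p unfolding as_rel_def by force
    with m quotientI[OF k] show "(m, as_rel C E X m `` {k}) \<in> state_class_pairs C X p E"
      unfolding state_class_pairs_def by blast
  qed
qed

lemma joint_state_eq_iff_same_class:
  assumes "(m, k) \<in> factorizations E X p" and "(m', k') \<in> factorizations E X p"
  shows "joint_state E k m = joint_state E k' m' \<longleftrightarrow>
    (m, as_rel C E X m `` {k}) = (m', as_rel C E X m' `` {k'})"
proof -
  from assms have "m \<in> hom C (unit C) E" "k \<in> hom C E X" "m' \<in> hom C (unit C) E" "k' \<in> hom C E X"
    unfolding factorizations_def by auto
  then show ?thesis by (simp add: joint_state_eq_iff as_rel_class_eq_iff cong: conj_cong)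
qed

end

theorem proposition1p13:
  fixes C :: "('o,'m) mcat" and p :: 'm and X E :: 'o
  assumes "markov_category C"
    and "has_conditionals C"
    and "p \<in> hom C (unit C) X"
  shows "\<exists>F. (\<forall>m K k. (m, K) \<in> state_class_pairs C X p E \<and> k \<in> K \<longrightarrow>
                 F (m, K) = mcmp C (tnm C k (idm C E)) (mcmp C (cpy C E) m))
           \<and> bij_betw F (state_class_pairs C X p E) (dilations C (unit C) X p E)"
proof -
  interpret markov_category C by fact
  let ?q = "\<lambda>(m, k). (m, as_rel C E X m `` {k})" and ?f = "\<lambda>(m, k). joint_state E k m"
  have "\<exists>F. (\<forall>a\<in>factorizations E X p. F (?q a) = ?f a)
      \<and> bij_betw F (state_class_pairs C X p E) (dilations C (unit C) X p E)"
    by (rule bij_betw_factor_through[OF state_class_pairs_eq_image_factorizations[symmetric]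
          dilations_eq_image_factorizations[OF assms(2), symmetric]])
      (clarsimp simp: joint_state_eq_iff_same_class)
  then obtain F where F: "\<forall>a\<in>factorizations E X p. F (?q a) = ?f a"
    and bij: "bij_betw F (state_class_pairs C X p E) (dilations C (unit C) X p E)" by blast
  have "F (m, K) = joint_state E k m" if "(m, K) \<in> state_class_pairs C X p E" and "k \<in> K" for m K k
    using F state_class_pairsD[OF that] by fastforce
  with bij show ?thesis unfolding joint_state_def by blast
qed

end
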